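(* Let $n>1$ and $k\ge1$. Let $\mathcal{B}$ be a special $n$-Brinkhuis $k$-triple, and suppose some word of $\mathcal{B}^{(0)}$ begins with the letters $01$. Then $n\ge 13$, and exactly one of the following alternatives holds: <ul> <li>every word in $\mathcal{B}^{(0)}$ begins with $012021$ and ends with $120210$;</li> <li>every word in $\mathcal{B}^{(0)}$ begins with $012102$ and ends with $201210$.</li> </ul>
   Context: Let $\Sigma=\{0,1,2\}$. A word over $\Sigma$ is square-free if it cannot be written as $xyyz$ with $y$ nonempty. $\mathcal{A}(n)$ is the set of square-free words of length $n$. For a word $w$, $\bar w$ denotes its reversal. $\tau$ is the letter permutation $0\mapsto1$, $1\mapsto2$, $2\mapsto0$, applied letterwise to words and elementwise to sets of words. An $n$-Brinkhuis $(k_0,k_1,k_2)$-triple consists of sets $\mathcal{B}^{(i)}\subset\mathcal{A}(n)$, $i\in\{0,1,2\}$, where $\mathcal{B}^{(i)}$ has $k_i\ge1$ distinct words. The defining condition: for every square-free word $ii'i''\in\mathcal{A}(3)$ and all $u\in\mathcal{B}^{(i)}$, $v\in\mathcal{B}^{(i')}$, $x\in\mathcal{B}^{(i'')}$, the concatenation $uvx$ is square-free. A special $n$-Brinkhuis $k$-triple is an $n$-Brinkhuis $(k,k,k)$-triple satisfying two further conditions: <ul> <li>$\mathcal{B}^{(1)}=\tau(\mathcal{B}^{(0)})$ and $\mathcal{B}^{(2)}=\tau^2(\mathcal{B}^{(0)})$;</li> <li>$w\in\mathcal{B}^{(0)}$ implies $\bar w\in\mathcal{B}^{(0)}$.</li>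 </ul> *)

theory Defs
  imports Main
begin

definition word3 :: "nat list \<Rightarrow> bool" where
  "word3 w \<longleftrightarrow> set w \<subseteq> {0,1,2}"

definition square_free :: "nat list \<Rightarrow> bool" where
  "square_free w \<longleftrightarrow> \<not> (\<exists>x y z. y \<noteq> [] \<and> w = x @ y @ y @ z)"

definition sqf_words :: "nat \<Rightarrow> nat list set" where
  "sqf_words n = {w. word3 w \<and> length w = n \<and> square_free w}"

definition tau_letter :: "nat \<Rightarrow> nat" where
  "tau_letter a = (a + 1) mod 3"

definition tau :: "nat list \<Rightarrow> nat list" where
  "tau w = map tau_letter w"

definition brinkhuis_triple ::
  "nat \<Rightarrow> (nat \<Rightarrow> nat list set) \<Rightarrow> nat \<Rightarrow> nat \<Rightarrow> nat \<Rightarrow> bool" where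
  "brinkhuis_triple n B k0 k1 k2 \<longleftrightarrow>
     (\<forall>i\<in>{0,1,2}. B i \<subseteq> sqf_words n) \<and>
     finite (B 0) \<and> finite (B 1) \<and> finite (B 2) \<and>
     card (B 0) = k0 \<and> card (B 1) = k1 \<and> card (B 2) = k2 \<and>
     k0 \<ge> 1 \<and> k1 \<ge> 1 \<and> k2 \<ge> 1 \<and>
     (\<forall>i i' i''. [i, i', i''] \<in> sqf_words 3 \<longrightarrow>
        (\<forall>u\<in>B i. \<forall>v\<in>B i'. \<forall>x\<in>B i''. square_free (u @ v @ x)))"

definition special_brinkhuis_triple ::
  "nat \<Rightarrow> (nat \<Rightarrow> nat list set) \<Rightarrow> nat \<Rightarrow> bool" where
  "special_brinkhuis_triple n B k \<longleftrightarrow>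
     brinkhuis_triple n B k k k \<and>
     B 1 = tau ` B 0 \<and> B 2 = (tau \<circ> tau) ` B 0 \<and>
     (\<forall>w\<in>B 0. rev w \<in> B 0)"

end

theory Submission
  imports Defs "HOL-Library.Sublist"
begin

text \<open>For words u, v, x of B(0), the Brinkhuis condition for the triples 010, 012, 020 and 021
says that u \<tau>(v) x, u \<tau>(v) \<tau>^2(x), u \<tau>^2(v) x and u \<tau>^2(v) \<tau>(x) are square-free; in
particular the junctions u \<tau>(v) and u \<tau>^2(v) are square-free. Both facts reduce the theorem
to finite searches. If w \<in> B(0) begins with 01 and n \<le> 12, already the family {w, rev w}
violates the first condition. For n \<ge> 6 the junction condition only involves the last six
letters s of u and the first six letters p of v: a word compatible with itself has s = rev p
with p among 12 words, and a word whose prefix begins with 01 is mutually compatible only with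
words having the same prefix, which is 012021 or 012102.\<close>

definition square_prefix :: "'a list \<Rightarrow> bool" where
  "square_prefix v \<longleftrightarrow> (\<exists>y z. y \<noteq> [] \<and> v = y @ y @ z)"

fun square_prefix_from :: "'a list \<Rightarrow> 'a list \<Rightarrow> bool" where
  "square_prefix_from y [] \<longleftrightarrow> False"
| "square_prefix_from y (c # r) \<longleftrightarrow> prefix (y @ [c]) r \<or> square_prefix_from (y @ [c]) r"

lemma square_prefix_from_iff:
  "square_prefix_from y r \<longleftrightarrow> (\<exists>z t. z \<noteq> [] \<and> r = z @ y @ z @ t)"
proof (induction r arbitrary: y)
  case Nil
  then show ?case by simp
next
  case (Cons c r)
  have "square_prefix_from y (c # r) \<longleftrightarrow>
      (\<exists>t. r = y @ [c] @ t) \<or> (\<exists>z t. z \<noteq> [] \<and> r = z @ (y @ [c]) @ z @ t)"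
    by (simp add: prefix_def Cons.IH)
  also have "\<dots> \<longleftrightarrow> (\<exists>z t. r = z @ y @ c # z @ t)"
    by (metis append_Cons append_Nil append_assoc)
  also have "\<dots> \<longleftrightarrow> (\<exists>z t. z \<noteq> [] \<and> c # r = z @ y @ z @ t)"
  proof
    assume "\<exists>z t. r = z @ y @ c # z @ t"
    then obtain z t where "r = z @ y @ c # z @ t" by blast
    then show "\<exists>z t. z \<noteq> [] \<and> c # r = z @ y @ z @ t"
      by (intro exI[of _ "c # z"] exI[of _ t]) simp
  next
    assume "\<exists>z t. z \<noteq> [] \<and> c # r = z @ y @ z @ t"
    then obtain z t where "z \<noteq> []" "c # r = z @ y @ z @ t" by blast
    then show "\<exists>z t. r = z @ y @ c # z @ t"
      by (cases z) auto
  qed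
  finally show ?case .
qed

lemma square_prefix_code [code]: "square_prefix v \<longleftrightarrow> square_prefix_from [] v"
  by (simp add: square_prefix_def square_prefix_from_iff)

lemma square_free_Nil [simp, code]: "square_free [] \<longleftrightarrow> True"
  by (simp add: square_free_def)

lemma square_free_sublist: "square_free w \<Longrightarrow> sublist v w \<Longrightarrow> square_free v"
  unfolding square_free_def sublist_def by (metis append_assoc)

lemma square_free_Cons [code]:
  "square_free (a # w) \<longleftrightarrow> square_free w \<and> \<not> square_prefix (a # w)"
proof
  assume sf: "square_free (a # w)"
  then have "square_free w" by (rule square_free_sublist) (simp add: sublist_Cons_right)
  moreover have "\<not> square_prefix (a # w)"
    using sf unfolding square_free_def square_prefix_def by (metis append_Nil)
  ultimately show "square_free w \<and> \<not> square_prefix (a # w)" ..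
next
  assume "square_free w \<and> \<not> square_prefix (a # w)"
  then show "square_free (a # w)"
    unfolding square_free_def square_prefix_def by (auto simp: Cons_eq_append_conv)
qed

lemma square_free_rev [simp]: "square_free (rev w) \<longleftrightarrow> square_free w"
proof -
  have "square_free (rev w)" if "square_free w" for w
    unfolding square_free_def
  proof
    assume "\<exists>x y z. y \<noteq> [] \<and> rev w = x @ y @ y @ z"
    then obtain x y z where "y \<noteq> []" "w = rev z @ rev y @ rev y @ rev x"
      by (metis append_assoc rev_append rev_rev_ident)
    with that show False unfolding square_free_def by auto
  qed
  then show ?thesis by (metis rev_rev_ident)
qed

fun left_extensions :: "nat \<Rightarrow> nat list \<Rightarrow> nat list list" where
  "left_extensions 0 v = [v]"
| "left_extensions (Suc m) v =
     [a # w. w \<leftarrow> left_extensions m v, a \<leftarrow> [0, 1, 2], \<not> square_prefix (a # w)]"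

lemma left_extensions_complete:
  "word3 u \<Longrightarrow> square_free (u @ v) \<Longrightarrow> u @ v \<in> set (left_extensions (length u) v)"
proof (induction u)
  case Nil
  then show ?case by simp
next
  case (Cons a u)
  then have "u @ v \<in> set (left_extensions (length u) v)" "a \<in> {0, 1, 2}"
    "\<not> square_prefix (a # u @ v)"
    by (auto simp: word3_def square_free_Cons)
  then show ?case by auto
qed

lemma sqf_words_take: "w \<in> sqf_words n \<Longrightarrow> j \<le> n \<Longrightarrow> take j w \<in> sqf_words j"
  unfolding sqf_words_def word3_def
  by (auto dest: in_set_takeD intro: square_free_sublist simp: sublist_take)

lemma sqf_words_drop: "w \<in> sqf_words n \<Longrightarrow> drop i w \<in> sqf_words (n - i)"
  unfolding sqf_words_def word3_def
  by (auto dest: in_set_dropD intro: square_free_sublist simp: sublist_drop)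

definition compatible :: "nat list \<Rightarrow> nat list \<Rightarrow> bool" where
  "compatible u v \<longleftrightarrow> square_free (u @ tau v) \<and> square_free (u @ tau (tau v))"

lemma compatible_drop_take: "compatible u v \<Longrightarrow> compatible (drop i u) (take j v)"
proof -
  have "sublist (drop i u @ take j x) (u @ x)" for x :: "nat list"
    by (metis append_assoc append_take_drop_id sublist_appendI)
  moreover have "tau (take j v) = take j (tau v)" "tau (tau (take j v)) = take j (tau (tau v))"
    by (simp_all add: tau_def take_map)
  ultimately show "compatible u v \<Longrightarrow> compatible (drop i u) (take j v)"
    unfolding compatible_def by (metis square_free_sublist)
qed

definition triple_square_free :: "nat list set \<Rightarrow> bool" where
  "triple_square_free S \<longleftrightarrow> (\<forall>u\<in>S. \<forall>v\<in>S. \<forall>x\<in>S.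
     square_free (u @ tau v @ x) \<and> square_free (u @ tau v @ tau (tau x)) \<and>
     square_free (u @ tau (tau v) @ x) \<and> square_free (u @ tau (tau v) @ tau x))"

lemma triple_square_free_subset: "triple_square_free S \<Longrightarrow> T \<subseteq> S \<Longrightarrow> triple_square_free T"
  unfolding triple_square_free_def by blast

lemma triple_square_free_compatible:
  assumes "triple_square_free S" "u \<in> S" "v \<in> S"
  shows "compatible u v"
proof -
  have "square_free ((u @ tau v) @ u)" "square_free ((u @ tau (tau v)) @ u)"
    using assms unfolding triple_square_free_def by auto
  then show ?thesis
    unfolding compatible_def by (auto intro: square_free_sublist)
qed

lemma special_triple_square_free:
  assumes "special_brinkhuis_triple n B k"
  shows "triple_square_free (B 0)"
  unfolding triple_square_free_def
proof (intro ballI)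
  have "\<forall>i i' i''. [i, i', i''] \<in> sqf_words 3 \<longrightarrow>
      (\<forall>u\<in>B i. \<forall>v\<in>B i'. \<forall>x\<in>B i''. square_free (u @ v @ x))"
    using assms unfolding special_brinkhuis_triple_def brinkhuis_triple_def by (elim conjE)
  then have cond: "square_free (u @ v @ x)"
    if "[i, i', i''] \<in> sqf_words 3" "u \<in> B i" "v \<in> B i'" "x \<in> B i''" for i i' i'' u v x
    using that by blast
  have taus: "tau y \<in> B 1" "tau (tau y) \<in> B 2" if "y \<in> B 0" for y
    using assms that unfolding special_brinkhuis_triple_def by auto
  have triples: "[0, 1, 0] \<in> sqf_words 3" "[0, 1, 2] \<in> sqf_words 3"
    "[0, 2, 0] \<in> sqf_words 3" "[0, 2, 1] \<in> sqf_words 3"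
    by (simp_all add: sqf_words_def word3_def square_free_Cons square_prefix_code)
  fix u v x assume "u \<in> B 0" "v \<in> B 0" "x \<in> B 0"
  with taus have "tau v \<in> B 1" "tau (tau v) \<in> B 2" "tau x \<in> B 1" "tau (tau x) \<in> B 2"
    by simp_all
  with \<open>u \<in> B 0\<close> \<open>x \<in> B 0\<close> show "square_free (u @ tau v @ x) \<and>
      square_free (u @ tau v @ tau (tau x)) \<and>
      square_free (u @ tau (tau v) @ x) \<and> square_free (u @ tau (tau v) @ tau x)"
    using cond[OF triples(1)] cond[OF triples(2)] cond[OF triples(3)] cond[OF triples(4)]
    by simp
qed

lemma short_word_not_triple_square_free:
  assumes w: "w \<in> sqf_words m" and "m \<le> 12" and "take 2 w = [0, 1]"
  shows "\<not> triple_square_free {w, rev w}"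
proof -
  have search: "\<forall>l\<in>set [0..<11]. \<forall>u\<in>set (left_extensions l [1, 0]).
      \<not> triple_square_free {u, rev u}"
    by code_simp
  define u where "u = rev (drop 2 w)"
  have "w = [0, 1] @ drop 2 w"
    by (metis append_take_drop_id \<open>take 2 w = [0, 1]\<close>)
  then have rev_w: "rev w = u @ [1, 0]"
    unfolding u_def by (metis rev.simps rev_append append.simps)
  have "square_free (u @ [1, 0])"
    using w unfolding rev_w[symmetric] sqf_words_def by simp
  moreover have "u \<in> sqf_words (m - 2)"
    using sqf_words_drop[OF w] unfolding u_def sqf_words_def word3_def by simp
  ultimately have "rev w \<in> set (left_extensions (m - 2) [1, 0])"
    using left_extensions_complete[of u "[1, 0]"] unfolding rev_w sqf_words_def by simp
  moreover have "m - 2 \<in> set [0..<11]" using \<open>m \<le> 12\<close> by simp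
  ultimately have "\<not> triple_square_free {rev w, rev (rev w)}"
    using search by blast
  then show ?thesis by (simp add: insert_commute)
qed

definition end_words :: "nat list list" where
  "end_words =
    [[0, 1, 2, 0, 2, 1], [0, 1, 2, 1, 0, 2], [0, 2, 1, 0, 1, 2], [0, 2, 1, 2, 0, 1],
     [1, 0, 2, 0, 1, 2], [1, 0, 2, 1, 2, 0], [1, 2, 0, 1, 0, 2], [1, 2, 0, 2, 1, 0],
     [2, 0, 1, 0, 2, 1], [2, 0, 1, 2, 1, 0], [2, 1, 0, 1, 2, 0], [2, 1, 0, 2, 0, 1]]"

lemma compatible_ends:
  assumes "s \<in> sqf_words 6" "p \<in> sqf_words 6" "compatible s p"
  shows "p \<in> set end_words \<and> s = rev p"
proof -
  have search: "\<forall>s\<in>set (left_extensions 6 []). \<forall>p\<in>set (left_extensions 6 []).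
      compatible s p \<longrightarrow> p \<in> set end_words \<and> s = rev p"
    by code_simp
  have "x \<in> set (left_extensions 6 [])" if "x \<in> sqf_words 6" for x
    using that left_extensions_complete[of x "[]"] by (simp add: sqf_words_def)
  with search assms show ?thesis by blast
qed

lemma end_words_mutually_compatible:
  assumes "p \<in> set end_words" "q \<in> set end_words" "take 2 p = [0, 1]"
    and "compatible (rev p) q" "compatible (rev q) p"
  shows "q = p \<and> (p = [0, 1, 2, 0, 2, 1] \<or> p = [0, 1, 2, 1, 0, 2])"
proof -
  have "\<forall>p\<in>set end_words. \<forall>q\<in>set end_words.
      take 2 p = [0, 1] \<and> compatible (rev p) q \<and> compatible (rev q) p \<longrightarrow>
      q = p \<and> (p = [0, 1, 2, 0, 2, 1] \<or> p = [0, 1, 2, 1, 0, 2])"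
    by code_simp
  with assms show ?thesis by blast
qed

lemma special_triple_sqf_words:
  "special_brinkhuis_triple n B k \<Longrightarrow> u \<in> B 0 \<Longrightarrow> u \<in> sqf_words n"
  unfolding special_brinkhuis_triple_def brinkhuis_triple_def by auto

lemma special_triple_length_ge_13:
  assumes sp: "special_brinkhuis_triple n B k" and "w \<in> B 0" "take 2 w = [0, 1]"
  shows "13 \<le> n"
proof (rule ccontr)
  assume "\<not> 13 \<le> n"
  have "rev w \<in> B 0"
    using sp \<open>w \<in> B 0\<close> unfolding special_brinkhuis_triple_def by auto
  then have "triple_square_free {w, rev w}"
    using special_triple_square_free[OF sp] \<open>w \<in> B 0\<close> by (auto intro: triple_square_free_subset)
  moreover have "\<not> triple_square_free {w, rev w}"
    using short_word_not_triple_square_free special_triple_sqf_words[OF sp \<open>w \<in> B 0\<close>]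
      \<open>\<not> 13 \<le> n\<close> \<open>take 2 w = [0, 1]\<close> by simp
  ultimately show False by contradiction
qed

lemma special_triple_junction:
  "special_brinkhuis_triple n B k \<Longrightarrow> u \<in> B 0 \<Longrightarrow> v \<in> B 0 \<Longrightarrow>
    compatible (drop i u) (take j v)"
  by (metis compatible_drop_take special_triple_square_free triple_square_free_compatible)

lemma special_triple_ends:
  assumes sp: "special_brinkhuis_triple n B k" and "6 \<le> n" "u \<in> B 0"
  shows "take 6 u \<in> set end_words \<and> drop (n - 6) u = rev (take 6 u)"
proof -
  have "u \<in> sqf_words n" using special_triple_sqf_words[OF sp \<open>u \<in> B 0\<close>] .
  then have "drop (n - 6) u \<in> sqf_words 6" "take 6 u \<in> sqf_words 6"
    using sqf_words_drop[of u n "n - 6"] sqf_words_take[of u n 6] \<open>6 \<le> n\<close> by simp_all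
  then show ?thesis
    using compatible_ends special_triple_junction[OF sp \<open>u \<in> B 0\<close> \<open>u \<in> B 0\<close>] by blast
qed

lemma special_triple_same_prefix:
  assumes sp: "special_brinkhuis_triple n B k" and "6 \<le> n"
    and w: "w \<in> B 0" "take 2 w = [0, 1]" and u: "u \<in> B 0"
  shows "take 6 u = take 6 w \<and> (take 6 w = [0, 1, 2, 0, 2, 1] \<or> take 6 w = [0, 1, 2, 1, 0, 2])"
proof (rule end_words_mutually_compatible)
  show "take 6 w \<in> set end_words" "take 6 u \<in> set end_words"
    using special_triple_ends[OF sp \<open>6 \<le> n\<close>] w u by blast+
  show "take 2 (take 6 w) = [0, 1]" using w by simp
  show "compatible (rev (take 6 w)) (take 6 u)" "compatible (rev (take 6 u)) (take 6 w)"
    using special_triple_ends[OF sp \<open>6 \<le> n\<close>] special_triple_junction[OF sp] w u by metis+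
qed

theorem proposition1:
  fixes n k :: nat and B :: "nat \<Rightarrow> nat list set"
  assumes "n > 1" and "k \<ge> 1"
    and "special_brinkhuis_triple n B k"
    and "\<exists>w\<in>B 0. take 2 w = [0, 1]"
  shows "n \<ge> 13 \<and>
    ((\<forall>w\<in>B 0. take 6 w = [0,1,2,0,2,1] \<and> drop (length w - 6) w = [1,2,0,2,1,0])
     \<noteq>
     (\<forall>w\<in>B 0. take 6 w = [0,1,2,1,0,2] \<and> drop (length w - 6) w = [2,0,1,2,1,0]))"
proof -
  note sp = \<open>special_brinkhuis_triple n B k\<close>
  obtain w where w: "w \<in> B 0" "take 2 w = [0, 1]" using \<open>\<exists>w\<in>B 0. take 2 w = [0, 1]\<close> by blast
  have "13 \<le> n" using special_triple_length_ge_13[OF sp w] .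
  then have "6 \<le> n" by simp
  have ends: "take 6 u = take 6 w \<and> drop (length u - 6) u = rev (take 6 w)" if "u \<in> B 0" for u
  proof -
    have "length u = n" using special_triple_sqf_words[OF sp that] by (simp add: sqf_words_def)
    moreover have "take 6 u = take 6 w" using special_triple_same_prefix[OF sp \<open>6 \<le> n\<close> w that] ..
    ultimately show ?thesis using special_triple_ends[OF sp \<open>6 \<le> n\<close> that] by simp
  qed
  have alt: "(\<forall>u\<in>B 0. take 6 u = p \<and> drop (length u - 6) u = rev p) \<longleftrightarrow> take 6 w = p"
    for p
  proof
    assume "\<forall>u\<in>B 0. take 6 u = p \<and> drop (length u - 6) u = rev p"
    then show "take 6 w = p" using w(1) by blast
  next
    assume "take 6 w = p"
    then show "\<forall>u\<in>B 0. take 6 u = p \<and> drop (length u - 6) u = rev p" using ends by simp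
  qed
  have "take 6 w = [0, 1, 2, 0, 2, 1] \<or> take 6 w = [0, 1, 2, 1, 0, 2]"
    using special_triple_same_prefix[OF sp \<open>6 \<le> n\<close> w w(1)] ..
  then show ?thesis
    using \<open>13 \<le> n\<close> alt[of "[0, 1, 2, 0, 2, 1]"] alt[of "[0, 1, 2, 1, 0, 2]"] by auto
qed

end
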